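(* Let $\mu$ be a Radon measure on $\mathbb{R}^d$ such that $R_\mu(p\to q)$ holds with constant $C$. Then there exists a constant $M$ depending only on $d,p,q,C$ such that $\mu(B(x,r))\le M r^{dq/p'}$ for every $x\in\mathbb{R}^d$ and every $r>0$; in particular $\mu$ is absolutely continuous with respect to $\mathcal{H}^{dq/p'}$. Moreover, if $0<\Theta^{*s}(\mu,x)<\infty$ for all $x$ in a set of positive $\mu$-measure, then $q\le \frac{s}{d}p'$.
   Context: The Fourier transform of $f\in\mathcal{S}(\mathbb{R}^d)$ (Schwartz space) is $\hat f(\xi)=\int e^{-2\pi i \xi\cdot x}f(x)\,dx$. A measure $\mu$ on $\mathbb{R}^d$ admits $(p,q)$ restriction with constant $C$, written $R_\mu(p\to q)$, if $\|\hat f\|_{L^q(\mu)}\le C\|f\|_{L^p(\mathbb{R}^d)}$ for every $f\in\mathcal{S}(\mathbb{R}^d)$. Here $p'$ is the conjugate exponent of $p$. $\mathcal{H}^t$ denotes the $t$-dimensional Hausdorff measure, and $\Theta^{*s}(\mu,x)=\limsup_{r\to0}\frac{\mu(B(x,r))}{\omega_s r^s}$ is the upper $s$-dimensional density. *)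

theory Defs
  imports "HOL-Analysis.Analysis" "HOL-Library.Liminf_Limsup"
begin

fun partials :: "'a::euclidean_space list \<Rightarrow> ('a \<Rightarrow> complex) \<Rightarrow> ('a \<Rightarrow> complex)" where
  "partials [] f = f"
| "partials (v # vs) f = (\<lambda>x. frechet_derivative (partials vs f) (at x) v)"

definition schwartz :: "('a::euclidean_space \<Rightarrow> complex) \<Rightarrow> bool" where
  "schwartz f \<longleftrightarrow>
     (\<forall>vs. set vs \<subseteq> Basis \<longrightarrow> (\<forall>x. partials vs f differentiable (at x))) \<and>
     (\<forall>vs (N::nat). set vs \<subseteq> Basis \<longrightarrow>
        bounded (range (\<lambda>x. norm x ^ N * norm (partials vs f x))))"

definition fourier :: "('a::euclidean_space \<Rightarrow> complex) \<Rightarrow> 'a \<Rightarrow> complex" where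
  "fourier f \<xi> = (LINT x|lborel. cis (- 2 * pi * (\<xi> \<bullet> x)) * f x)"

text \<open>L^p norm with respect to Lebesgue measure (used only for Schwartz functions,
  where it is finite).\<close>
definition Lp_norm :: "real \<Rightarrow> ('a::euclidean_space \<Rightarrow> complex) \<Rightarrow> real" where
  "Lp_norm p f = (LINT x|lborel. norm (f x) powr p) powr (1 / p)"

text \<open>Restriction estimate R_mu(p -> q) with constant C:
  ||hat f||_{L^q(mu)} <= C ||f||_{L^p} for all Schwartz f, stated as
  integral |hat f|^q dmu <= (C ||f||_p)^q (nonnegative extended integral).\<close>
definition restriction :: "'a::euclidean_space measure \<Rightarrow> real \<Rightarrow> real \<Rightarrow> real \<Rightarrow> bool" where
  "restriction \<mu> p q C \<longleftrightarrow>
     (\<forall>f. schwartz f \<longrightarrow>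
        (\<integral>\<^sup>+ \<xi>. ennreal (norm (fourier f \<xi>) powr q) \<partial>\<mu>) \<le> ennreal ((C * Lp_norm p f) powr q))"

definition radon_measure :: "'a::euclidean_space measure \<Rightarrow> bool" where
  "radon_measure \<mu> \<longleftrightarrow> sets \<mu> = sets borel \<and> (\<forall>K. compact K \<longrightarrow> emeasure \<mu> K < \<infinity>)"

text \<open>Volume of the unit ball in dimension s (for real s >= 0).\<close>
definition omega :: "real \<Rightarrow> real" where
  "omega s = pi powr (s / 2) / Gamma (s / 2 + 1)"

text \<open>Contribution of a covering set: omega_t (diam E / 2)^t, with 0^0 = 1 and empty set 0.\<close>
definition hcontrib :: "real \<Rightarrow> 'a::euclidean_space set \<Rightarrow> ennreal" where
  "hcontrib t E = (if E = {} then 0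
      else ennreal (omega t * (if t = 0 then 1 else (diameter E / 2) powr t)))"

definition hausdorff_delta :: "real \<Rightarrow> real \<Rightarrow> 'a::euclidean_space set \<Rightarrow> ennreal" where
  "hausdorff_delta t \<delta> A =
     (INF C \<in> {C :: nat \<Rightarrow> 'a set. A \<subseteq> (\<Union>i. C i) \<and>
                 (\<forall>i. bounded (C i) \<and> diameter (C i) \<le> \<delta>)}.
        \<Sum>i. hcontrib t (C i))"

definition hausdorff :: "real \<Rightarrow> 'a::euclidean_space set \<Rightarrow> ennreal" where
  "hausdorff t A = (SUP \<delta> \<in> {0<..}. hausdorff_delta t \<delta> A)"

definition upper_density :: "'a::euclidean_space measure \<Rightarrow> real \<Rightarrow> 'a \<Rightarrow> ereal" where
  "upper_density \<mu> s x =
     Limsup (at_right 0) (\<lambda>r. enn2ereal (emeasure \<mu> (ball x r)) / ereal (omega s * r powr s))"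

end

theory Submission
  imports Defs
begin

text \<open>Test the restriction estimate with the modulated Gaussian
  \<open>f(y) = e\<^bsup>-\<pi>\<bar>y\<bar>\<^sup>2/a\<^sup>2\<^esup> e\<^bsup>2\<pi>i x\<cdot>y\<^esup>\<close>. Its Fourier transform is a Gaussian bump of height \<open>\<approx> a\<^sup>d\<close> centred
  at \<open>x\<close>; integrating \<open>cos \<theta> \<ge> 1 - \<theta>\<^sup>2/2\<close> shows that it stays above half its height on \<open>B(x, r)\<close>
  when \<open>a = \<kappa> / r\<close> for a suitable absolute \<open>\<kappa>\<close>, while \<open>\<parallel>f\<parallel>\<^sub>p \<approx> a\<^bsup>d/p\<^esup>\<close>. Hence
  \<open>\<mu>(B(x, r)) a\<^bsup>dq\<^esup> \<lesssim> C\<^sup>q a\<^bsup>dq/p\<^esup>\<close>, i.e. \<open>\<mu>(B(x, r)) \<le> M r\<^sup>t\<close> with \<open>t = d q (1 - 1/p)\<close>.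
  Covering a set by balls of radius comparable to the sets of a \<open>\<delta>\<close>-cover then bounds \<open>\<mu>\<close> by a
  multiple of the \<open>t\<close>-dimensional Hausdorff content, and \<open>\<mu>(B(x, r)) / r\<^sup>s \<le> M r\<^bsup>t-s\<^esup> \<rightarrow> 0\<close> forces
  the upper \<open>s\<close>-density to vanish when \<open>s < t\<close>.\<close>

section \<open>Gaussian integrals\<close>

lemma power_div_fact_le_exp:
  fixes x :: real
  assumes "0 \<le> x"
  shows "x ^ n / fact n \<le> exp x"
proof -
  have "summable (\<lambda>k. x ^ k /\<^sub>R fact k)"
    using exp_converges sums_summable by blast
  then have "(\<Sum>k\<in>{n}. x ^ k /\<^sub>R fact k) \<le> (\<Sum>k. x ^ k /\<^sub>R fact k)"
    by (rule sum_le_suminf) (auto simp: assms)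
  also have "\<dots> = exp x"
    using exp_converges sums_unique by metis
  finally show ?thesis
    by (simp add: divide_inverse_commute)
qed

lemma poly_times_gaussian_bounded:
  fixes c :: real
  assumes c: "0 < c"
  shows "\<exists>B. \<forall>y\<ge>0. (1 + y) ^ n * exp (- c * y\<^sup>2) \<le> B"
proof (intro exI allI impI)
  fix y :: real
  assume y: "0 \<le> y"
  have "(c * y\<^sup>2) ^ n / fact n \<le> exp (c * y\<^sup>2)"
    by (rule power_div_fact_le_exp) (use c in auto)
  then have "c ^ n * y ^ (2 * n) \<le> fact n * exp (c * y\<^sup>2)"
    by (simp add: field_simps power_mult_distrib power_mult power2_eq_square)
  then have "c ^ n * (y ^ (2 * n) * exp (- c * y\<^sup>2)) \<le> fact n"
    by (simp add: exp_minus field_simps)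
  then have high: "y ^ (2 * n) * exp (- c * y\<^sup>2) \<le> fact n / c ^ n"
    using c by (simp add: field_simps)
  have max_le: "max 1 y ^ n \<le> 1 + y ^ (2 * n)"
  proof (cases "y \<le> 1")
    case False
    then have "max 1 y ^ n = y ^ n"
      by simp
    also have "\<dots> \<le> y ^ (2 * n)"
      using False by (intro power_increasing) auto
    finally show ?thesis
      by linarith
  qed (use y in \<open>simp add: max_def\<close>)
  have "(1 + y) ^ n \<le> (2 * max 1 y) ^ n"
    by (rule power_mono) (use y in auto)
  also have "\<dots> = 2 ^ n * max 1 y ^ n"
    by (rule power_mult_distrib)
  also have "\<dots> \<le> 2 ^ n * (1 + y ^ (2 * n))"
    using max_le by (rule mult_left_mono) simp
  finally have "(1 + y) ^ n \<le> 2 ^ n * (1 + y ^ (2 * n))" .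
  then have "(1 + y) ^ n * exp (- c * y\<^sup>2) \<le> 2 ^ n * (1 + y ^ (2 * n)) * exp (- c * y\<^sup>2)"
    by (rule mult_right_mono) simp
  also have "\<dots> = 2 ^ n * (exp (- c * y\<^sup>2) + y ^ (2 * n) * exp (- c * y\<^sup>2))"
    by (simp add: algebra_simps)
  also have "\<dots> \<le> 2 ^ n * (1 + fact n / c ^ n)"
    using c y high by (intro mult_left_mono add_mono) auto
  finally show "(1 + y) ^ n * exp (- c * y\<^sup>2) \<le> 2 ^ n * (1 + fact n / c ^ n)" .
qed

lemma poly_decay_le_suminf_ball_indicator:
  fixes \<phi> :: "'a::real_normed_vector \<Rightarrow> real"
  assumes B: "0 \<le> B" and decay: "(1 + norm y) ^ n * \<phi> y \<le> B"
  shows "ennreal (\<phi> y) \<le> (\<Sum>k. ennreal (B / (real k + 1) ^ n) * indicator (ball 0 (real k + 1)) y)"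
proof -
  define k where "k = nat \<lfloor>norm y\<rfloor>"
  have k: "real k \<le> norm y" "norm y < real k + 1"
    unfolding k_def by (simp_all add: of_nat_nat)
  have "\<phi> y \<le> B / (1 + norm y) ^ n"
    using decay by (simp add: field_simps mult.commute add_pos_nonneg)
  also have "\<dots> \<le> B / (real k + 1) ^ n"
    using B k by (intro divide_left_mono power_mono mult_pos_pos) auto
  finally have "ennreal (\<phi> y) \<le> (\<Sum>j\<in>{k}. ennreal (B / (real j + 1) ^ n) * indicator (ball 0 (real j + 1)) y)"
    using k by (simp add: indicator_def ennreal_leI)
  also have "\<dots> \<le> (\<Sum>j. ennreal (B / (real j + 1) ^ n) * indicator (ball 0 (real j + 1)) y)"
    by (rule sum_le_suminf) (auto intro: summableI)
  finally show ?thesis .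
qed

text \<open>The \<open>k\<close>-th ball in the domination above has integral \<open>O((k + 1)\<^sup>d / (k + 1)\<^bsup>d+2\<^esup>)\<close>, which is
  summable.\<close>
lemma integrable_lborel_of_poly_decay:
  fixes \<phi> :: "'a::euclidean_space \<Rightarrow> real"
  assumes meas: "\<phi> \<in> borel_measurable borel" and nonneg: "\<And>y. 0 \<le> \<phi> y"
    and decay: "\<And>y. (1 + norm y) ^ (DIM('a) + 2) * \<phi> y \<le> B"
  shows "integrable lborel \<phi>"
proof -
  define d where "d = DIM('a)"
  define V where "V = unit_ball_vol (real d)"
  have B: "0 \<le> B"
    using decay[of 0] nonneg[of 0] by simp
  define b where "b k = B / (real k + 1) ^ (d + 2)" for k :: nat
  have b: "0 \<le> b k" for k
    using B by (simp add: b_def)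
  have V: "0 \<le> V"
    unfolding V_def by simp
  have vol: "emeasure lborel (ball (0::'a) \<rho>) = ennreal (V * \<rho> ^ d)" if "0 \<le> \<rho>" for \<rho>
    using content_ball[of \<rho> "0::'a"] that emeasure_lborel_ball_finite[of "0::'a" \<rho>]
    by (simp add: V_def d_def emeasure_eq_ennreal_measure)
  have "ennreal (norm (\<phi> y))
      \<le> (\<Sum>k. ennreal (b k) * indicator (ball (0::'a) (real k + 1)) y)" for y
    using poly_decay_le_suminf_ball_indicator[of B y "DIM('a) + 2" \<phi>] B decay[of y] nonneg[of y] by (simp add: d_def b_def)
  then have "(\<integral>\<^sup>+ y. ennreal (norm (\<phi> y)) \<partial>lborel)
      \<le> (\<integral>\<^sup>+ y. (\<Sum>k. ennreal (b k) * indicator (ball (0::'a) (real k + 1)) y) \<partial>lborel)"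
    by (intro nn_integral_mono)
  also have "\<dots> = (\<Sum>k. \<integral>\<^sup>+ y. ennreal (b k) * indicator (ball (0::'a) (real k + 1)) y \<partial>lborel)"
    by (intro nn_integral_suminf borel_measurable_times_ennreal borel_measurable_indicator) auto
  also have "\<dots> = (\<Sum>k. ennreal (b k * (V * (real k + 1) ^ d)))"
    using b V by (simp add: nn_integral_cmult_indicator vol ennreal_mult)
  also have "\<dots> = (\<Sum>k. ennreal (B * V * inverse (real (Suc k) ^ 2)))"
  proof (intro suminf_cong arg_cong[where f = ennreal])
    fix k :: nat
    have split: "(real k + 1) ^ (d + 2) = (real k + 1) ^ d * real (Suc k) ^ 2"
      by (simp only: power_add of_nat_Suc add.commute)
    have "(real k + 1) ^ d > 0"
      by simp
    then show "b k * (V * (real k + 1) ^ d) = B * V * inverse (real (Suc k) ^ 2)"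
      unfolding b_def split by (simp add: field_simps)
  qed
  also have "\<dots> < \<infinity>"
  proof -
    have "summable (\<lambda>k. inverse (real k ^ 2))"
      by (rule inverse_power_summable) auto
    then have "summable (\<lambda>k. B * V * inverse (real (Suc k) ^ 2))"
      by (subst summable_Suc_iff) (rule summable_mult)
    then have "(\<Sum>k. ennreal (B * V * inverse (real (Suc k) ^ 2))) \<noteq> top"
      by (rule ennreal_suminf_neq_top) (use B V in simp)
    then show ?thesis
      by (simp add: top.not_eq_extremum)
  qed
  finally show ?thesis
    using meas by (intro integrableI_bounded) auto
qed

lemma nn_integral_lborel_scaleR:
  fixes F :: "'a::euclidean_space \<Rightarrow> ennreal"
  assumes F: "F \<in> borel_measurable borel" and a: "0 < a"
  shows "(\<integral>\<^sup>+ y. F (y /\<^sub>R a) \<partial>lborel) = ennreal (a ^ DIM('a)) * (\<integral>\<^sup>+ y. F y \<partial>lborel)"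
proof -
  have m: "(\<lambda>y. F (y /\<^sub>R a)) \<in> borel_measurable borel"
    using F by measurable
  have "(\<integral>\<^sup>+ y. F (y /\<^sub>R a) \<partial>lborel) =
     (\<integral>\<^sup>+ y. F (y /\<^sub>R a) \<partial>(density (distr lborel borel (\<lambda>x. 0 + a *\<^sub>R x)) (\<lambda>_. \<bar>a\<bar> ^ DIM('a))))"
    using lborel_affine[of a "0::'a"] a by simp
  also have "\<dots> = (\<integral>\<^sup>+ x. ennreal (a ^ DIM('a)) * F x \<partial>lborel)"
    using m a by (simp add: nn_integral_density nn_integral_distr)
  also have "\<dots> = ennreal (a ^ DIM('a)) * (\<integral>\<^sup>+ y. F y \<partial>lborel)"
    using F by (simp add: nn_integral_cmult)
  finally show ?thesis .
qed

lemma integral_lborel_scaleR: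
  fixes F :: "'a::euclidean_space \<Rightarrow> real"
  assumes F: "F \<in> borel_measurable borel" "\<And>y. 0 \<le> F y" "integrable lborel F" and a: "0 < a"
  shows "integral\<^sup>L lborel (\<lambda>y. F (y /\<^sub>R a)) = a ^ DIM('a) * integral\<^sup>L lborel F"
proof -
  have "(\<integral>\<^sup>+ y. ennreal (F (y /\<^sub>R a)) \<partial>lborel) = ennreal (a ^ DIM('a) * integral\<^sup>L lborel F)"
    using nn_integral_lborel_scaleR[of "\<lambda>y. ennreal (F y)" a] F a
    by (simp add: nn_integral_eq_integral ennreal_mult integral_nonneg_AE)
  moreover from this have int: "integrable lborel (\<lambda>y. F (y /\<^sub>R a))"
    using F by (intro integrableI_nn_integral_finite) auto
  ultimately show "integral\<^sup>L lborel (\<lambda>y. F (y /\<^sub>R a)) = a ^ DIM('a) * integral\<^sup>L lborel F"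
    using F a int by (subst (asm) nn_integral_eq_integral)
      (auto intro!: integral_nonneg_AE simp: ennreal_inj)
qed

definition gauss_moment :: "nat \<Rightarrow> real \<Rightarrow> 'a::euclidean_space \<Rightarrow> real" where
  "gauss_moment m c y = norm y ^ m * exp (- c * norm y ^ 2)"

lemma borel_measurable_gauss_moment [measurable]: "gauss_moment m c \<in> borel_measurable borel"
  unfolding gauss_moment_def[abs_def] by measurable

lemma gauss_moment_nonneg: "0 \<le> gauss_moment m c y"
  by (simp add: gauss_moment_def)

lemma integral_gauss_moment_nonneg: "0 \<le> integral\<^sup>L lborel (gauss_moment m c)"
  by (intro integral_nonneg_AE) (simp add: gauss_moment_nonneg)

lemma integrable_gauss_moment:
  assumes c: "0 < c"
  shows "integrable lborel (gauss_moment m c :: 'a::euclidean_space \<Rightarrow> real)"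
proof -
  obtain B where B: "\<forall>t\<ge>0. (1 + t) ^ (DIM('a) + 2 + m) * exp (- c * t\<^sup>2) \<le> B"
    using poly_times_gaussian_bounded[OF c] by blast
  have "(1 + norm y) ^ (DIM('a) + 2) * gauss_moment m c y \<le> B" for y :: 'a
  proof -
    have "(1 + norm y) ^ (DIM('a) + 2) * gauss_moment m c y
      \<le> (1 + norm y) ^ (DIM('a) + 2) * ((1 + norm y) ^ m * exp (- c * norm y ^ 2))"
      unfolding gauss_moment_def by (intro mult_left_mono mult_right_mono power_mono) auto
    also have "\<dots> \<le> B"
      using B by (simp add: power_add mult.assoc)
    finally show ?thesis .
  qed
  then show ?thesis
    by (intro integrable_lborel_of_poly_decay) (simp_all add: gauss_moment_nonneg)
qed

lemma integral_gauss_moment_scale: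
  assumes c: "0 < c" and a: "0 < a"
  shows "integral\<^sup>L lborel (gauss_moment m (c / a\<^sup>2) :: 'a::euclidean_space \<Rightarrow> real)
       = a ^ (DIM('a) + m) * integral\<^sup>L lborel (gauss_moment m c :: 'a \<Rightarrow> real)"
proof -
  have "gauss_moment m (c / a\<^sup>2) = (\<lambda>y::'a. a ^ m * gauss_moment m c (y /\<^sub>R a))"
    using a by (auto simp: fun_eq_iff gauss_moment_def power_divide field_simps)
  then show ?thesis
    using integral_lborel_scaleR[OF borel_measurable_gauss_moment gauss_moment_nonneg
        integrable_gauss_moment[OF c] a, where 'a='a] a
    by (simp add: power_add)
qed

lemma integral_gauss_moment_0_pos:
  assumes c: "0 < c"
  shows "0 < integral\<^sup>L lborel (gauss_moment 0 c :: 'a::euclidean_space \<Rightarrow> real)"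
proof -
  have "0 < exp (- c) * measure lborel (ball (0::'a) 1)"
    using content_ball_pos[of 1 "0::'a"] by simp
  also have "\<dots> = integral\<^sup>L lborel (\<lambda>y::'a. exp (- c) * indicator (ball 0 1) y)"
    by simp
  also have "\<dots> \<le> integral\<^sup>L lborel (gauss_moment 0 c :: 'a \<Rightarrow> real)"
  proof (rule integral_mono)
    show "integrable lborel (\<lambda>y::'a. exp (- c) * indicator (ball 0 1) y)"
      using emeasure_lborel_ball_finite[of "0::'a" 1]
      by (intro integrable_mult_right integrable_real_indicator) auto
    fix y :: 'a
    show "exp (- c) * indicator (ball 0 1) y \<le> gauss_moment 0 c y"
    proof (cases "y \<in> ball 0 1")
      case True
      then have "norm y ^ 2 \<le> 1"
        by (simp add: abs_square_le_1)
      then show ?thesis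
        using True c by (simp add: gauss_moment_def mult_left_le)
    qed (simp add: gauss_moment_nonneg)
  qed (rule integrable_gauss_moment[OF c])
  finally show ?thesis .
qed

section \<open>Fourier transform of the modulated Gaussian\<close>

lemma cos_ge_1_minus_sq_div_2: "1 - t\<^sup>2 / 2 \<le> cos (t::real)"
proof -
  have "\<bar>sin (t / 2)\<bar> \<le> \<bar>t / 2\<bar>"
    by (rule abs_sin_x_le_abs_x)
  then have "(sin (t / 2))\<^sup>2 \<le> (t / 2)\<^sup>2"
    by (metis abs_le_square_iff)
  moreover have "cos t = 1 - 2 * (sin (t / 2))\<^sup>2"
    using cos_double_sin[of "t / 2"] by simp
  ultimately show ?thesis
    by (simp add: power_divide)
qed

lemma Re_fourier_ge:
  fixes g :: "'a::euclidean_space \<Rightarrow> real"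
  assumes meas: "g \<in> borel_measurable borel" and nonneg: "\<And>y. 0 \<le> g y"
    and int: "integrable lborel g" and int2: "integrable lborel (\<lambda>y. norm y ^ 2 * g y)"
  shows "integral\<^sup>L lborel g - 2 * pi\<^sup>2 * norm \<xi> ^ 2 * integral\<^sup>L lborel (\<lambda>y. norm y ^ 2 * g y)
    \<le> Re (fourier (\<lambda>y. of_real (g y)) \<xi>)"
proof -
  define h where "h y = cis (- 2 * pi * (\<xi> \<bullet> y)) * of_real (g y)" for y
  have "h \<in> borel_measurable lborel"
    unfolding h_def cis_conv_exp using meas by measurable
  then have int_h: "integrable lborel h"
    by (rule Bochner_Integration.integrable_bound[OF int]) (auto simp: h_def norm_mult nonneg)
  have Re_h: "Re (h y) = g y * cos (2 * pi * (\<xi> \<bullet> y))" for y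
    by (simp add: h_def)
  have "integral\<^sup>L lborel g - 2 * pi\<^sup>2 * norm \<xi> ^ 2 * integral\<^sup>L lborel (\<lambda>y. norm y ^ 2 * g y)
      = integral\<^sup>L lborel (\<lambda>y. g y - 2 * pi\<^sup>2 * norm \<xi> ^ 2 * (norm y ^ 2 * g y))"
    using int int2 by simp
  also have "\<dots> \<le> integral\<^sup>L lborel (\<lambda>y. Re (h y))"
  proof (rule integral_mono)
    fix y :: 'a
    have "(\<xi> \<bullet> y)\<^sup>2 \<le> (norm \<xi> * norm y)\<^sup>2"
      using power_mono[OF Cauchy_Schwarz_ineq2[of \<xi> y], of 2] by simp
    then have "1 - 2 * pi\<^sup>2 * norm \<xi> ^ 2 * norm y ^ 2 \<le> 1 - (2 * pi * (\<xi> \<bullet> y))\<^sup>2 / 2"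
      by (simp add: power_mult_distrib)
    also have "\<dots> \<le> cos (2 * pi * (\<xi> \<bullet> y))"
      by (rule cos_ge_1_minus_sq_div_2)
    finally have "g y * (1 - 2 * pi\<^sup>2 * norm \<xi> ^ 2 * norm y ^ 2) \<le> g y * cos (2 * pi * (\<xi> \<bullet> y))"
      using nonneg[of y] by (rule mult_left_mono)
    then show "g y - 2 * pi\<^sup>2 * norm \<xi> ^ 2 * (norm y ^ 2 * g y) \<le> Re (h y)"
      unfolding Re_h by (simp add: algebra_simps)
  qed (use int int2 int_h in auto)
  also have "\<dots> = Re (fourier (\<lambda>y. of_real (g y)) \<xi>)"
    unfolding fourier_def h_def[symmetric] using int_h by (simp add: integral_Re)
  finally show ?thesis .
qed

definition gauss_wave :: "real \<Rightarrow> 'a \<Rightarrow> 'a::euclidean_space \<Rightarrow> complex" where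
  "gauss_wave c x y = exp (of_real (- c * (y \<bullet> y)) + \<i> * of_real (2 * pi * (x \<bullet> y)))"

lemma norm_gauss_wave: "norm (gauss_wave c x y) = exp (- c * norm y ^ 2)"
  by (simp add: gauss_wave_def power2_norm_eq_inner)

lemma fourier_gauss_wave:
  "fourier (gauss_wave c x) \<xi> = fourier (\<lambda>y. of_real (gauss_moment 0 c y)) (\<xi> - x)"
proof -
  have "cis (- 2 * pi * (\<xi> \<bullet> y)) * gauss_wave c x y
      = cis (- 2 * pi * ((\<xi> - x) \<bullet> y)) * of_real (gauss_moment 0 c y)" for y
  proof -
    have "gauss_wave c x y = exp (of_real (- c * (y \<bullet> y))) * exp (\<i> * of_real (2 * pi * (x \<bullet> y)))"
      unfolding gauss_wave_def by (rule exp_add)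
    also have "\<dots> = of_real (exp (- c * norm y ^ 2)) * cis (2 * pi * (x \<bullet> y))"
      by (simp only: cis_conv_exp power2_norm_eq_inner exp_of_real)
    moreover have "cis (- 2 * pi * (\<xi> \<bullet> y)) * cis (2 * pi * (x \<bullet> y)) = cis (- 2 * pi * ((\<xi> - x) \<bullet> y))"
      by (simp add: cis_mult inner_diff_left algebra_simps)
    ultimately show ?thesis
      by (simp add: gauss_moment_def mult.left_commute mult.assoc)
  qed
  then show ?thesis
    by (simp add: fourier_def)
qed

lemma norm_fourier_gauss_wave_ge:
  fixes x \<xi> :: "'a::euclidean_space"
  assumes a: "0 < a" and \<xi>: "dist x \<xi> < r"
  defines "I\<^sub>0 \<equiv> integral\<^sup>L lborel (gauss_moment 0 pi :: 'a \<Rightarrow> real)"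
    and "I\<^sub>2 \<equiv> integral\<^sup>L lborel (gauss_moment 2 pi :: 'a \<Rightarrow> real)"
  shows "a ^ DIM('a) * (I\<^sub>0 - 2 * pi\<^sup>2 * (a * r)\<^sup>2 * I\<^sub>2) \<le> norm (fourier (gauss_wave (pi / a\<^sup>2) x) \<xi>)"
proof -
  define c where "c = pi / a\<^sup>2"
  have c: "0 < c"
    using a by (simp add: c_def)
  have moment2: "(\<lambda>y::'a. norm y ^ 2 * gauss_moment 0 c y) = gauss_moment 2 c"
    by (simp add: fun_eq_iff gauss_moment_def)
  have scale: "integral\<^sup>L lborel (gauss_moment m c :: 'a \<Rightarrow> real)
      = a ^ (DIM('a) + m) * integral\<^sup>L lborel (gauss_moment m pi :: 'a \<Rightarrow> real)" for m
    unfolding c_def using a by (rule integral_gauss_moment_scale[OF pi_gt_zero])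
  have "norm (\<xi> - x) ^ 2 * I\<^sub>2 \<le> r ^ 2 * I\<^sub>2"
    using \<xi> by (intro mult_right_mono power_mono)
      (auto simp: I\<^sub>2_def dist_norm norm_minus_commute integral_gauss_moment_nonneg)
  then have "(2 * pi\<^sup>2 * a ^ (DIM('a) + 2)) * (norm (\<xi> - x) ^ 2 * I\<^sub>2)
      \<le> (2 * pi\<^sup>2 * a ^ (DIM('a) + 2)) * (r ^ 2 * I\<^sub>2)"
    by (rule mult_left_mono) (use a in simp)
  then have "2 * pi\<^sup>2 * norm (\<xi> - x) ^ 2 * (a ^ (DIM('a) + 2) * I\<^sub>2)
      \<le> 2 * pi\<^sup>2 * (a * r)\<^sup>2 * (a ^ DIM('a) * I\<^sub>2)"
    by (simp add: power_add power_mult_distrib power2_eq_square ac_simps)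
  moreover have "a ^ DIM('a) * (I\<^sub>0 - 2 * pi\<^sup>2 * (a * r)\<^sup>2 * I\<^sub>2)
      = a ^ DIM('a) * I\<^sub>0 - 2 * pi\<^sup>2 * (a * r)\<^sup>2 * (a ^ DIM('a) * I\<^sub>2)"
    by (simp add: algebra_simps)
  ultimately have "a ^ DIM('a) * (I\<^sub>0 - 2 * pi\<^sup>2 * (a * r)\<^sup>2 * I\<^sub>2)
      \<le> a ^ DIM('a) * I\<^sub>0 - 2 * pi\<^sup>2 * norm (\<xi> - x) ^ 2 * (a ^ (DIM('a) + 2) * I\<^sub>2)"
    by linarith
  also have "\<dots> = integral\<^sup>L lborel (gauss_moment 0 c :: 'a \<Rightarrow> real)
      - 2 * pi\<^sup>2 * norm (\<xi> - x) ^ 2 * integral\<^sup>L lborel (\<lambda>y::'a. norm y ^ 2 * gauss_moment 0 c y)"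
    by (simp add: moment2 scale I\<^sub>0_def I\<^sub>2_def)
  also have "\<dots> \<le> Re (fourier (gauss_wave c x) \<xi>)"
    unfolding fourier_gauss_wave
    by (rule Re_fourier_ge) (simp_all add: gauss_moment_nonneg integrable_gauss_moment c moment2)
  also have "\<dots> \<le> norm (fourier (gauss_wave c x) \<xi>)"
    by (rule complex_Re_le_cmod)
  finally show ?thesis
    by (simp add: c_def)
qed

lemma Lp_norm_gauss_wave:
  fixes x :: "'a::euclidean_space"
  assumes a: "0 < a" and p: "0 < p"
  shows "Lp_norm p (gauss_wave (pi / a\<^sup>2) x)
    = (a ^ DIM('a) * integral\<^sup>L lborel (gauss_moment 0 (p * pi) :: 'a \<Rightarrow> real)) powr (1 / p)"
proof -
  have "(\<lambda>y. norm (gauss_wave (pi / a\<^sup>2) x y) powr p) = gauss_moment 0 (p * pi / a\<^sup>2)"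
    by (simp add: norm_gauss_wave powr_def fun_eq_iff gauss_moment_def)
  then show ?thesis
    unfolding Lp_norm_def using integral_gauss_moment_scale[of "p * pi" a 0, where 'a='a] a p by simp
qed

section \<open>The modulated Gaussian is a Schwartz function\<close>

inductive complex_polynomial_function :: "('a::euclidean_space \<Rightarrow> complex) \<Rightarrow> bool" where
  const: "complex_polynomial_function (\<lambda>y. c)"
| inner: "complex_polynomial_function (\<lambda>y. of_real (y \<bullet> v))"
| add: "complex_polynomial_function P \<Longrightarrow> complex_polynomial_function Q \<Longrightarrow>
    complex_polynomial_function (\<lambda>y. P y + Q y)"
| mult: "complex_polynomial_function P \<Longrightarrow> complex_polynomial_function Q \<Longrightarrow>
    complex_polynomial_function (\<lambda>y. P y * Q y)"

lemma complex_polynomial_function_has_derivative: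
  assumes "complex_polynomial_function P"
  shows "\<exists>D. (\<forall>y. (P has_derivative D y) (at y)) \<and> (\<forall>v. complex_polynomial_function (\<lambda>y. D y v))"
  using assms
proof induction
  case (const c)
  show ?case
    by (rule exI[of _ "\<lambda>y h. 0"]) (auto intro: complex_polynomial_function.const)
next
  case (inner v)
  have "bounded_linear (\<lambda>h. complex_of_real (h \<bullet> v))"
    by (intro bounded_linear_compose[OF bounded_linear_of_real] bounded_linear_inner_left)
  then show ?case
    by (intro exI[of _ "\<lambda>y h. of_real (h \<bullet> v)"])
      (auto intro: complex_polynomial_function.const bounded_linear_imp_has_derivative)
next
  case (add P Q)
  then obtain DP DQ where "\<forall>y. (P has_derivative DP y) (at y)" "\<forall>y. (Q has_derivative DQ y) (at y)"
    "\<forall>v. complex_polynomial_function (\<lambda>y. DP y v)" "\<forall>v. complex_polynomial_function (\<lambda>y. DQ y v)"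
    by blast
  then show ?case
    by (intro exI[of _ "\<lambda>y h. DP y h + DQ y h"])
      (auto intro: complex_polynomial_function.add has_derivative_add)
next
  case (mult P Q)
  then obtain DP DQ where "\<forall>y. (P has_derivative DP y) (at y)" "\<forall>y. (Q has_derivative DQ y) (at y)"
    "\<forall>v. complex_polynomial_function (\<lambda>y. DP y v)" "\<forall>v. complex_polynomial_function (\<lambda>y. DQ y v)"
    by blast
  moreover have "complex_polynomial_function (\<lambda>y. P y * DQ y v + DP y v * Q y)" for v
    using mult.hyps calculation by (intro complex_polynomial_function.add complex_polynomial_function.mult) auto
  ultimately show ?case
    by (intro exI[of _ "\<lambda>y h. P y * DQ y h + DP y h * Q y"]) (auto intro: has_derivative_mult)
qed

lemma complex_polynomial_function_bound:
  assumes "complex_polynomial_function P"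
  shows "\<exists>K n. 0 \<le> K \<and> (\<forall>y. norm (P y) \<le> K * (1 + norm y) ^ n)"
  using assms
proof induction
  case (const c)
  show ?case
    by (intro exI[of _ "norm c"] exI[of _ 0]) simp
next
  case (inner v)
  have "norm (of_real (y \<bullet> v) :: complex) \<le> norm v * (1 + norm y) ^ 1" for y :: 'a
    using Cauchy_Schwarz_ineq2[of y v] by (simp add: mult.commute mult_left_mono order_trans)
  then show ?case
    by (intro exI[of _ "norm v"] exI[of _ 1]) simp
next
  case (add P Q)
  then obtain K1 n1 K2 n2 where K: "0 \<le> K1" "\<forall>y. norm (P y) \<le> K1 * (1 + norm y) ^ n1"
    "0 \<le> K2" "\<forall>y. norm (Q y) \<le> K2 * (1 + norm y) ^ n2"
    by blast
  have "norm (P y + Q y) \<le> (K1 + K2) * (1 + norm y) ^ (n1 + n2)" for y :: 'a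
  proof -
    have "(1 + norm y) ^ n1 \<le> (1 + norm y) ^ (n1 + n2)" "(1 + norm y) ^ n2 \<le> (1 + norm y) ^ (n1 + n2)"
      by (intro power_increasing; simp)+
    then have "K1 * (1 + norm y) ^ n1 + K2 * (1 + norm y) ^ n2 \<le> (K1 + K2) * (1 + norm y) ^ (n1 + n2)"
      using K by (simp add: distrib_right add_mono mult_left_mono)
    then show ?thesis
      using K(2,4)[rule_format, of y] norm_triangle_ineq[of "P y" "Q y"] by linarith
  qed
  then show ?case
    using K by (intro exI[of _ "K1 + K2"] exI[of _ "n1 + n2"]) simp
next
  case (mult P Q)
  then obtain K1 n1 K2 n2 where K: "0 \<le> K1" "\<forall>y. norm (P y) \<le> K1 * (1 + norm y) ^ n1"
    "0 \<le> K2" "\<forall>y. norm (Q y) \<le> K2 * (1 + norm y) ^ n2"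
    by blast
  have "norm (P y * Q y) \<le> (K1 * K2) * (1 + norm y) ^ (n1 + n2)" for y :: 'a
    using mult_mono[OF K(2)[rule_format, of y] K(4)[rule_format, of y]] K
    by (simp add: norm_mult power_add algebra_simps)
  then show ?case
    using K by (intro exI[of _ "K1 * K2"] exI[of _ "n1 + n2"]) simp
qed

lemma has_derivative_gauss_wave:
  "(gauss_wave c x has_derivative
     (\<lambda>h. gauss_wave c x y * (of_real (- 2 * c * (y \<bullet> h)) + \<i> * of_real (2 * pi * (x \<bullet> h))))) (at y)"
proof -
  have "((\<lambda>y. of_real (- c * (y \<bullet> y)) + \<i> * of_real (2 * pi * (x \<bullet> y))) has_derivative
      (\<lambda>h. of_real (- 2 * c * (y \<bullet> h)) + \<i> * of_real (2 * pi * (x \<bullet> h)))) (at y)"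
    by (rule has_derivative_eq_rhs, (rule derivative_intros)+)
      (auto simp: fun_eq_iff inner_commute algebra_simps)
  from has_derivative_compose[OF this DERIV_exp[unfolded has_field_derivative_def]]
  show ?thesis
    unfolding gauss_wave_def[abs_def] .
qed

lemma has_derivative_times_gauss_wave:
  assumes "(P has_derivative DP) (at y)"
  shows "((\<lambda>y. P y * gauss_wave c x y) has_derivative
     (\<lambda>h. P y * (gauss_wave c x y * (of_real (- 2 * c * (y \<bullet> h)) + \<i> * of_real (2 * pi * (x \<bullet> h))))
       + DP h * gauss_wave c x y)) (at y)"
  using assms has_derivative_gauss_wave by (rule has_derivative_mult)

lemma partials_gauss_wave:
  "\<exists>P. complex_polynomial_function P \<and> partials vs (gauss_wave c x) = (\<lambda>y. P y * gauss_wave c x y)"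
proof (induction vs)
  case Nil
  show ?case
    by (intro exI[of _ "\<lambda>y. 1"]) (auto intro: complex_polynomial_function.const)
next
  case (Cons v vs)
  then obtain P where P: "complex_polynomial_function P"
    and partials: "partials vs (gauss_wave c x) = (\<lambda>y. P y * gauss_wave c x y)"
    by blast
  obtain DP where DP: "\<forall>y. (P has_derivative DP y) (at y)"
    and DP_poly: "\<forall>v. complex_polynomial_function (\<lambda>y. DP y v)"
    using complex_polynomial_function_has_derivative[OF P] by blast
  define Q where "Q y = P y * (of_real (- 2 * c) * of_real (y \<bullet> v) + \<i> * of_real (2 * pi * (x \<bullet> v)))
    + DP y v"
    for y
  have "frechet_derivative (\<lambda>y. P y * gauss_wave c x y) (at y) v = Q y * gauss_wave c x y" for y
    unfolding frechet_derivative_at[OF has_derivative_times_gauss_wave[OF DP[rule_format]], symmetric]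
    by (simp add: Q_def algebra_simps)
  then have "partials (v # vs) (gauss_wave c x) = (\<lambda>y. Q y * gauss_wave c x y)"
    by (simp add: partials)
  moreover have "complex_polynomial_function Q"
    unfolding Q_def using P DP_poly by (intro complex_polynomial_function.intros) auto
  ultimately show ?case
    by blast
qed

lemma schwartz_gauss_wave:
  fixes x :: "'a::euclidean_space"
  assumes c: "0 < c"
  shows "schwartz (gauss_wave c x)"
  unfolding schwartz_def
proof (intro conjI allI impI)
  fix vs :: "'a list" and y :: 'a
  obtain P where P: "complex_polynomial_function P"
    and partials: "partials vs (gauss_wave c x) = (\<lambda>y. P y * gauss_wave c x y)"
    using partials_gauss_wave by blast
  obtain DP where "\<forall>y. (P has_derivative DP y) (at y)"
    using complex_polynomial_function_has_derivative[OF P] by blast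
  then show "partials vs (gauss_wave c x) differentiable (at y)"
    unfolding partials by (blast intro: differentiableI has_derivative_times_gauss_wave)
next
  fix vs :: "'a list" and N :: nat
  obtain P where P: "complex_polynomial_function P"
    and partials: "partials vs (gauss_wave c x) = (\<lambda>y. P y * gauss_wave c x y)"
    using partials_gauss_wave by blast
  obtain K n where K: "0 \<le> K" "\<forall>y. norm (P y) \<le> K * (1 + norm y) ^ n"
    using complex_polynomial_function_bound[OF P] by blast
  obtain B where B: "\<forall>t\<ge>0. (1 + t) ^ (N + n) * exp (- c * t\<^sup>2) \<le> B"
    using poly_times_gaussian_bounded[OF c] by blast
  have "norm y ^ N * norm (P y * gauss_wave c x y) \<le> K * B" for y
  proof -
    have "norm y ^ N * norm (P y * gauss_wave c x y)
        \<le> (1 + norm y) ^ N * ((K * (1 + norm y) ^ n) * exp (- c * norm y ^ 2))"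
      using K by (auto simp: norm_mult norm_gauss_wave intro!: mult_mono mult_right_mono power_mono)
    also have "\<dots> = K * ((1 + norm y) ^ (N + n) * exp (- c * norm y ^ 2))"
      by (simp add: power_add algebra_simps)
    also have "\<dots> \<le> K * B"
      using B K by (intro mult_left_mono) auto
    finally show ?thesis .
  qed
  then show "bounded (range (\<lambda>y. norm y ^ N * norm (partials vs (gauss_wave c x) y)))"
    unfolding bounded_real partials by auto
qed


section \<open>Ball growth from the restriction estimate\<close>

lemma restriction_emeasure_le:
  assumes restr: "restriction \<mu> p q C" and S: "S \<in> sets \<mu>" and f: "schwartz f"
    and L: "0 < L" and q: "0 < q" and C: "0 \<le> C"
    and lower: "\<And>\<xi>. \<xi> \<in> S \<Longrightarrow> L \<le> norm (fourier f \<xi>)"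
  shows "emeasure \<mu> S \<le> ennreal ((C * Lp_norm p f / L) powr q)"
proof -
  define X where "X = (C * Lp_norm p f) powr q"
  have "ennreal (L powr q) * emeasure \<mu> S = (\<integral>\<^sup>+ \<xi>. ennreal (L powr q) * indicator S \<xi> \<partial>\<mu>)"
    using S by (simp add: nn_integral_cmult_indicator)
  also have "\<dots> \<le> (\<integral>\<^sup>+ \<xi>. ennreal (norm (fourier f \<xi>) powr q) \<partial>\<mu>)"
    using lower L q by (intro nn_integral_mono) (auto simp: indicator_def intro!: ennreal_leI powr_mono2)
  also have "\<dots> \<le> ennreal X"
    using restr f unfolding restriction_def X_def by blast
  also have "\<dots> = ennreal (L powr q) * ennreal (X / L powr q)"
    using L by (simp add: ennreal_mult[symmetric] X_def)
  finally have "emeasure \<mu> S \<le> ennreal (X / L powr q)"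
    using L by (subst (asm) ennreal_mult_le_mult_iff) auto
  also have "X / L powr q = (C * Lp_norm p f / L) powr q"
    using L C by (simp add: X_def Lp_norm_def powr_divide)
  finally show ?thesis .
qed

lemma restriction_emeasure_ball_le:
  fixes \<mu> :: "'a::euclidean_space measure"
  assumes restr: "restriction \<mu> p q C" and sets: "sets \<mu> = sets borel"
    and p: "0 < p" and q: "0 < q" and C: "0 \<le> C" and a: "0 < a"
  defines "d \<equiv> real DIM('a)"
    and "I\<^sub>0 \<equiv> integral\<^sup>L lborel (gauss_moment 0 pi :: 'a \<Rightarrow> real)"
    and "I\<^sub>2 \<equiv> integral\<^sup>L lborel (gauss_moment 2 pi :: 'a \<Rightarrow> real)"
    and "J \<equiv> integral\<^sup>L lborel (gauss_moment 0 (p * pi) :: 'a \<Rightarrow> real)"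
  assumes small: "2 * pi\<^sup>2 * (a * r)\<^sup>2 * I\<^sub>2 \<le> I\<^sub>0 / 2"
  shows "emeasure \<mu> (ball x r) \<le> ennreal ((2 * C * J powr (1 / p) / I\<^sub>0 * a powr (d / p - d)) powr q)"
proof -
  have I\<^sub>0: "0 < I\<^sub>0"
    unfolding I\<^sub>0_def by (rule integral_gauss_moment_0_pos) simp
  have J: "0 \<le> J"
    unfolding J_def by (rule integral_gauss_moment_nonneg)
  have a_pow: "a ^ DIM('a) = a powr d"
    using a by (simp add: d_def powr_realpow)
  define f where "f = gauss_wave (pi / a\<^sup>2) x"
  have "a powr d * (I\<^sub>0 / 2) \<le> norm (fourier f \<xi>)" if "\<xi> \<in> ball x r" for \<xi>
  proof -
    have "a powr d * (I\<^sub>0 / 2) \<le> a powr d * (I\<^sub>0 - 2 * pi\<^sup>2 * (a * r)\<^sup>2 * I\<^sub>2)"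
      using small by (intro mult_left_mono) auto
    also have "\<dots> \<le> norm (fourier f \<xi>)"
      using norm_fourier_gauss_wave_ge[OF a, of x \<xi> r] that
      by (simp add: f_def I\<^sub>0_def I\<^sub>2_def a_pow)
    finally show ?thesis .
  qed
  then have "emeasure \<mu> (ball x r) \<le> ennreal ((C * Lp_norm p f / (a powr d * (I\<^sub>0 / 2))) powr q)"
    using sets a I\<^sub>0 q C
    by (intro restriction_emeasure_le[OF restr]) (auto simp: f_def schwartz_gauss_wave)
  also have "Lp_norm p f = (a powr d * J) powr (1 / p)"
    unfolding f_def J_def a_pow[symmetric] using a p by (rule Lp_norm_gauss_wave)
  also have "C * (a powr d * J) powr (1 / p) / (a powr d * (I\<^sub>0 / 2))
      = 2 * C * J powr (1 / p) / I\<^sub>0 * a powr (d / p - d)"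
    using a J I\<^sub>0 by (simp add: powr_mult powr_powr powr_diff field_simps)
  finally show ?thesis .
qed

lemma restriction_ball_growth:
  fixes p q C :: real
  assumes p: "0 < p" and q: "0 < q" and C: "0 \<le> C"
  shows "\<exists>M\<ge>0. \<forall>(\<mu> :: 'a::euclidean_space measure) x r.
    restriction \<mu> p q C \<and> sets \<mu> = sets borel \<and> 0 < r \<longrightarrow>
    emeasure \<mu> (ball x r) \<le> ennreal (M * r powr (real DIM('a) * q * (1 - 1 / p)))"
proof -
  define d where "d = real DIM('a)"
  define I\<^sub>0 where "I\<^sub>0 = integral\<^sup>L lborel (gauss_moment 0 pi :: 'a \<Rightarrow> real)"
  define I\<^sub>2 where "I\<^sub>2 = integral\<^sup>L lborel (gauss_moment 2 pi :: 'a \<Rightarrow> real)"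
  define J where "J = integral\<^sup>L lborel (gauss_moment 0 (p * pi) :: 'a \<Rightarrow> real)"
  have I\<^sub>0: "0 < I\<^sub>0"
    unfolding I\<^sub>0_def by (rule integral_gauss_moment_0_pos) simp
  have I\<^sub>2: "0 \<le> I\<^sub>2"
    unfolding I\<^sub>2_def by (rule integral_gauss_moment_nonneg)
  define \<kappa> where "\<kappa> = sqrt (I\<^sub>0 / (4 * pi\<^sup>2 * (I\<^sub>2 + 1)))"
  have \<kappa>: "0 < \<kappa>"
    unfolding \<kappa>_def using I\<^sub>0 I\<^sub>2 by simp
  have "0 < 4 * pi\<^sup>2 * (I\<^sub>2 + 1)"
    using I\<^sub>2 by simp
  then have "2 * pi\<^sup>2 * \<kappa>\<^sup>2 * I\<^sub>2 = I\<^sub>0 / 2 * (I\<^sub>2 / (I\<^sub>2 + 1))"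
    unfolding \<kappa>_def using I\<^sub>0 I\<^sub>2 by (simp add: field_simps)
  also have "\<dots> \<le> I\<^sub>0 / 2"
    using I\<^sub>0 I\<^sub>2 by (intro mult_left_le) auto
  finally have \<kappa>_small: "2 * pi\<^sup>2 * \<kappa>\<^sup>2 * I\<^sub>2 \<le> I\<^sub>0 / 2" .
  define K where "K = 2 * C * J powr (1 / p) / I\<^sub>0 * \<kappa> powr (d / p - d)"
  have "emeasure \<mu> (ball x r) \<le> ennreal (K powr q * r powr (d * q * (1 - 1 / p)))"
    if "restriction \<mu> p q C" "sets \<mu> = sets borel" and r: "0 < r" for \<mu> :: "'a measure" and x r
  proof -
    have ar: "\<kappa> / r * r = \<kappa>"
      using r by simp
    have "emeasure \<mu> (ball x r) \<le> ennreal ((2 * C * J powr (1 / p) / I\<^sub>0 * (\<kappa> / r) powr (d / p - d)) powr q)"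
      using restriction_emeasure_ball_le[OF that(1,2) p q C, of "\<kappa> / r" r x] \<kappa> r \<kappa>_small
      unfolding d_def I\<^sub>0_def I\<^sub>2_def J_def ar by simp
    also have "(\<kappa> / r) powr (d / p - d) = \<kappa> powr (d / p - d) / r powr (d / p - d)"
      by (rule powr_divide)
    also have "\<dots> = \<kappa> powr (d / p - d) * r powr (d - d / p)"
      by (simp add: divide_inverse powr_minus[symmetric])
    also have "2 * C * J powr (1 / p) / I\<^sub>0 * (\<kappa> powr (d / p - d) * r powr (d - d / p))
        = K * r powr (d - d / p)"
      by (simp add: K_def)
    also have "(K * r powr (d - d / p)) powr q = K powr q * (r powr (d - d / p)) powr q"
      by (rule powr_mult)
    also have "(r powr (d - d / p)) powr q = r powr (d * q * (1 - 1 / p))"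
      by (simp add: powr_powr algebra_simps)
    finally show ?thesis .
  qed
  then show ?thesis
    unfolding d_def by (intro exI[of _ "K powr q"]) auto
qed

section \<open>Measures with polynomial ball growth\<close>

lemma omega_pos: "0 \<le> s \<Longrightarrow> 0 < omega s"
  unfolding omega_def by (intro divide_pos_pos) auto

lemma max_powr:
  fixes u v t :: real
  assumes "0 \<le> u" "0 \<le> v" "0 \<le> t"
  shows "max u v powr t = max (u powr t) (v powr t)"
proof (cases "u \<le> v")
  case True
  then show ?thesis
    using powr_mono2[OF assms(3,1) True] by (simp add: max_absorb2)
next
  case False
  then show ?thesis
    using powr_mono2[OF assms(3,2), of u] by (simp add: max_absorb1)
qed

text \<open>The ball has radius about \<open>2 diam E\<close>; the factor \<open>4\<^sup>t\<close> converts \<open>(2 diam E)\<^sup>t\<close> into the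
  \<open>(diam E / 2)\<^sup>t\<close> of \<^const>\<open>hcontrib\<close>.\<close>
lemma bounded_subset_ball_hcontrib:
  fixes E :: "'a::euclidean_space set"
  assumes E: "bounded E" "E \<noteq> {}" and t: "0 \<le> t" and M: "0 \<le> M" and \<eta>: "0 < \<eta>"
  obtains z \<rho> where "0 < \<rho>" "E \<subseteq> ball z \<rho>"
    "ennreal (M * \<rho> powr t) \<le> ennreal (M * 4 powr t / omega t) * hcontrib t E + ennreal \<eta>"
proof -
  obtain z where z: "z \<in> E"
    using E by blast
  define D where "D = diameter E"
  have D: "0 \<le> D"
    unfolding D_def using diameter_bounded_bound[OF E(1) z z] by simp
  have sub: "E \<subseteq> ball z \<rho>" if "D < \<rho>" for \<rho>
    using diameter_bounded_bound[OF E(1) z] that by (force simp: D_def)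
  have \<omega>: "0 < omega t"
    using t by (rule omega_pos)
  show ?thesis
  proof (cases "t = 0")
    case True
    have "omega 0 = 1"
      by (simp add: omega_def)
    then show ?thesis
      using True E D M by (intro that[of "D + 1" z] sub) (auto simp: hcontrib_def)
  next
    case False
    define \<rho> where "\<rho> = max (2 * D) ((\<eta> / (M + 1)) powr (1 / t))"
    have \<rho>: "0 < \<rho>"
      unfolding \<rho>_def using \<eta> M by (simp add: less_max_iff_disj)
    have "D < \<rho>"
      using \<rho> D by (cases "D = 0") (auto simp: \<rho>_def less_max_iff_disj)
    have "\<rho> powr t = max ((2 * D) powr t) (\<eta> / (M + 1))"
      unfolding \<rho>_def using t False \<eta> M D by (simp add: max_powr powr_powr)
    also have "\<dots> \<le> 4 powr t * (D / 2) powr t + \<eta> / (M + 1)"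
      using \<eta> M by (simp add: powr_mult[symmetric])
    finally have "M * \<rho> powr t \<le> M * (4 powr t * (D / 2) powr t + \<eta> / (M + 1))"
      using M by (rule mult_left_mono)
    also have "\<dots> = M * (4 powr t * (D / 2) powr t) + M * (\<eta> / (M + 1))"
      by (rule distrib_left)
    also have "M * (\<eta> / (M + 1)) \<le> \<eta>"
      using M \<eta> by (simp add: field_simps)
    finally have "M * \<rho> powr t \<le> M * 4 powr t / omega t * (omega t * (D / 2) powr t) + \<eta>"
      using \<omega> by simp
    then have "ennreal (M * \<rho> powr t) \<le> ennreal (M * 4 powr t / omega t) * hcontrib t E + ennreal \<eta>"
      using False E \<omega> M \<eta>
      by (simp add: hcontrib_def D_def ennreal_mult[symmetric] ennreal_plus[symmetric] del: ennreal_plus)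
    with \<rho> sub[OF \<open>D < \<rho>\<close>] show ?thesis
      by (rule that)
  qed
qed

lemma emeasure_le_hcontrib_suminf:
  fixes \<mu> :: "'a::euclidean_space measure"
  assumes growth: "\<And>x r. 0 < r \<Longrightarrow> emeasure \<mu> (ball x r) \<le> ennreal (M * r powr t)"
    and M: "0 \<le> M" and t: "0 \<le> t" and sets: "sets \<mu> = sets borel"
    and cover: "A \<subseteq> (\<Union>i. C i)" and bdd: "\<And>i. bounded (C i)"
  shows "emeasure \<mu> A \<le> ennreal (M * 4 powr t / omega t) * (\<Sum>i. hcontrib t (C i))"
proof (rule ennreal_le_epsilon)
  fix e :: real
  assume e: "0 < e"
  define K where "K = ennreal (M * 4 powr t / omega t)"
  define \<eta> where "\<eta> i = e * (1 / 2) ^ Suc i" for i :: nat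
  have "\<exists>B. B \<in> sets \<mu> \<and> C i \<subseteq> B \<and> emeasure \<mu> B \<le> K * hcontrib t (C i) + ennreal (\<eta> i)" for i
  proof (cases "C i = {}")
    case False
    moreover have "0 < \<eta> i"
      using e by (simp add: \<eta>_def)
    ultimately obtain z \<rho> where "0 < \<rho>" "C i \<subseteq> ball z \<rho>"
      "ennreal (M * \<rho> powr t) \<le> K * hcontrib t (C i) + ennreal (\<eta> i)"
      using bounded_subset_ball_hcontrib[OF bdd] t M unfolding K_def by metis
    then show ?thesis
      using growth sets by (intro exI[of _ "ball z \<rho>"]) (auto intro: order_trans)
  qed (rule exI[of _ "{}"], simp)
  then obtain B where B: "\<And>i. B i \<in> sets \<mu>" "\<And>i. C i \<subseteq> B i"
    and \<mu>B: "\<And>i. emeasure \<mu> (B i) \<le> K * hcontrib t (C i) + ennreal (\<eta> i)"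
    by metis
  have "A \<subseteq> (\<Union>i. B i)"
    using cover B(2) by blast
  then have "emeasure \<mu> A \<le> emeasure \<mu> (\<Union>i. B i)"
    using B(1) by (intro emeasure_mono) auto
  also have "\<dots> \<le> (\<Sum>i. emeasure \<mu> (B i))"
    using B by (intro emeasure_subadditive_countably) auto
  also have "\<dots> \<le> (\<Sum>i. K * hcontrib t (C i) + ennreal (\<eta> i))"
    using \<mu>B by (intro suminf_le) auto
  also have "\<dots> = K * (\<Sum>i. hcontrib t (C i)) + (\<Sum>i. ennreal (\<eta> i))"
    by (simp add: suminf_add[symmetric] ennreal_suminf_cmult)
  also have "(\<Sum>i. ennreal (\<eta> i)) = ennreal e"
    using e sums_mult[OF power_half_series, of e] unfolding \<eta>_def by (intro suminf_ennreal_eq) auto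
  finally show "emeasure \<mu> A \<le> K * (\<Sum>i. hcontrib t (C i)) + ennreal e" .
qed

lemma emeasure_eq_0_if_hausdorff_eq_0:
  fixes \<mu> :: "'a::euclidean_space measure"
  assumes growth: "\<And>x r. 0 < r \<Longrightarrow> emeasure \<mu> (ball x r) \<le> ennreal (M * r powr t)"
    and M: "0 \<le> M" and t: "0 \<le> t" and sets: "sets \<mu> = sets borel"
    and null: "hausdorff t A = 0"
  shows "emeasure \<mu> A = 0"
proof -
  define K where "K = M * 4 powr t / omega t"
  have K: "0 \<le> K"
    unfolding K_def using M omega_pos[OF t] by simp
  have "hausdorff_delta t 1 A \<le> hausdorff t A"
    unfolding hausdorff_def by (rule SUP_upper) simp
  then have delta_null: "hausdorff_delta t 1 A = 0"
    using null by simp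
  have "emeasure \<mu> A \<le> 0 + ennreal e" if e: "0 < e" for e
  proof -
    have "hausdorff_delta t 1 A < ennreal (e / (K + 1))"
      using delta_null e K by simp
    then obtain C where C: "A \<subseteq> (\<Union>i. C i)" "\<And>i. bounded (C i)"
      and small: "(\<Sum>i. hcontrib t (C i)) < ennreal (e / (K + 1))"
      unfolding hausdorff_delta_def INF_less_iff by blast
    have "emeasure \<mu> A \<le> ennreal K * (\<Sum>i. hcontrib t (C i))"
      unfolding K_def by (rule emeasure_le_hcontrib_suminf[OF growth M t sets C])
    also have "\<dots> \<le> ennreal K * ennreal (e / (K + 1))"
      using small by (intro mult_left_mono) auto
    also have "\<dots> \<le> ennreal e"
      using K e by (simp add: ennreal_mult[symmetric] field_simps)
    finally show ?thesis
      by simp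
  qed
  then show ?thesis
    by (metis ennreal_le_epsilon le_zero_eq)
qed

lemma upper_density_le_0_if_growth:
  fixes \<mu> :: "'a::euclidean_space measure"
  assumes growth: "\<And>r. 0 < r \<Longrightarrow> emeasure \<mu> (ball x r) \<le> ennreal (M * r powr t)"
    and M: "0 \<le> M" and s: "0 \<le> s" "s < t"
  shows "upper_density \<mu> s x \<le> 0"
proof -
  have \<omega>: "0 < omega s"
    using s by (intro omega_pos) simp
  define g where "g r = ereal (M / omega s * r powr (t - s))" for r :: real
  have "\<forall>\<^sub>F r in at_right 0. enn2ereal (emeasure \<mu> (ball x r)) / ereal (omega s * r powr s) \<le> g r"
  proof (rule eventually_at_rightI[of 0 1])
    fix r :: real
    assume "r \<in> {0<..<1}"
    then have r: "0 < r"
      by simp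
    have "enn2ereal (emeasure \<mu> (ball x r)) \<le> ereal (M * r powr t)"
      using growth[OF r] M by (simp add: less_eq_ennreal.rep_eq enn2ereal_ennreal)
    then have "enn2ereal (emeasure \<mu> (ball x r)) / ereal (omega s * r powr s)
        \<le> ereal (M * r powr t / (omega s * r powr s))"
      using \<omega> r by (auto dest: ereal_divide_right_mono[where z = "ereal (omega s * r powr s)"])
    also have "M * r powr t / (omega s * r powr s) = M / omega s * r powr (t - s)"
      using \<omega> r by (simp add: powr_diff field_simps)
    finally show "enn2ereal (emeasure \<mu> (ball x r)) / ereal (omega s * r powr s) \<le> g r"
      unfolding g_def .
  qed simp
  then have "upper_density \<mu> s x \<le> Limsup (at_right 0) g"
    unfolding upper_density_def by (rule Limsup_mono)
  also have "Limsup (at_right 0) g = 0"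
  proof -
    have "((\<lambda>r::real. r powr (t - s)) \<longlongrightarrow> 0) (at_right 0)"
      using s by (intro tendsto_zero_powrI tendsto_ident_at eventually_at_rightI[of 0 1]) auto
    then have "(g \<longlongrightarrow> ereal 0) (at_right 0)"
      unfolding g_def by (intro tendsto_ereal tendsto_mult_right_zero)
    then show ?thesis
      by (intro lim_imp_Limsup) (auto simp: zero_ereal_def)
  qed
  finally show ?thesis .
qed

theorem mainTheorem2:
  fixes p q C :: real
  assumes p: "1 \<le> p" and q: "1 \<le> q" and C: "0 \<le> C"
  defines "d \<equiv> real DIM('a::euclidean_space)"
  shows "\<exists>M::real. \<forall>\<mu> :: 'a measure. radon_measure \<mu> \<and> restriction \<mu> p q C \<longrightarrow>
           (\<forall>x r. 0 < r \<longrightarrow> emeasure \<mu> (ball x r) \<le> ennreal (M * r powr (d * q * (1 - 1 / p))))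
         \<and> (\<forall>A \<in> sets borel. hausdorff (d * q * (1 - 1 / p)) A = 0 \<longrightarrow> emeasure \<mu> A = 0)
         \<and> (\<forall>s. 0 \<le> s \<longrightarrow>
              (\<exists>A \<in> sets \<mu>. emeasure \<mu> A > 0 \<and>
                  (\<forall>x\<in>A. 0 < upper_density \<mu> s x \<and> upper_density \<mu> s x < \<infinity>))
              \<longrightarrow> d * q * (1 - 1 / p) \<le> s)"
proof -
  define t where "t = d * q * (1 - 1 / p)"
  have t: "0 \<le> t"
    unfolding t_def d_def using p q by (simp add: field_simps)
  obtain M where M: "0 \<le> M" and growth: "\<forall>(\<mu> :: 'a measure) x r.
      restriction \<mu> p q C \<and> sets \<mu> = sets borel \<and> 0 < r \<longrightarrow> emeasure \<mu> (ball x r) \<le> ennreal (M * r powr t)"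
    using restriction_ball_growth[of p q C] p q C unfolding t_def d_def by auto
  have ball_growth: "emeasure \<mu> (ball x r) \<le> ennreal (M * r powr t)"
    if "radon_measure \<mu>" "restriction \<mu> p q C" "0 < r" for \<mu> :: "'a measure" and x r
    using growth that by (auto simp: radon_measure_def)
  have "emeasure \<mu> A = 0"
    if "radon_measure \<mu>" "restriction \<mu> p q C" "hausdorff t A = 0" for \<mu> :: "'a measure" and A
    using emeasure_eq_0_if_hausdorff_eq_0[OF ball_growth[OF that(1,2)] M t] that
    by (simp add: radon_measure_def)
  moreover have "t \<le> s" if "radon_measure \<mu>" "restriction \<mu> p q C" "0 \<le> s"
    and "0 < upper_density \<mu> s x" for \<mu> :: "'a measure" and s x
    using upper_density_le_0_if_growth[of \<mu> x M t s] ball_growth[OF that(1,2)] M that(3,4) by force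
  ultimately show ?thesis
    unfolding t_def[symmetric] using ball_growth
    by (intro exI[of _ M]) (fastforce simp: ex_in_conv[symmetric])
qed

end
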